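(* Let $\beta:\mathbb{Z}\to\mathbb{R}$ have convergent increments and suppose $\beta(k)>0$ for all $k\in\mathbb{Z}$. Let $D_\beta$ be the operator on $\mathcal{H}$ given by $D_\beta f=\sum_{n}U^n(\beta(\mathbb{K}+n)+\beta(-\mathbb{K}))f_n(\mathbb{K})$ (i.e. $D_\beta f=\beta(\mathbb{K})f+f\beta(-\mathbb{K})$). Then $D_\beta$ is invertible, with $D_\beta^{-1}f=\sum_n U^n(\beta(\mathbb{K}+n)+\beta(-\mathbb{K}))^{-1}f_n(\mathbb{K})$, and for every $f\in\mathcal{H}^+$ (in the domain of $D_\beta^{-1}$) we have $$\langle \Theta f, D_\beta^{-1}f\rangle\ge 0.$$
   Context: Let $\{E_k\}_{k\in\mathbb{Z}}$ be the canonical basis of $\ell^2(\mathbb{Z})$, $UE_k=E_{k+1}$ the bilateral shift, $\mathbb{K}E_k=kE_k$, and for $a:\mathbb{Z}\to\mathbb{C}$, $a(\mathbb{K})E_k=a(k)E_k$. A function $\beta$ has convergent increments if $k\mapsto\beta(k)-\beta(k-1)$ has finite limits as $k\to+\infty$ and as $k\to-\infty$. $\mathcal{H}$ is the Hilbert space of Hilbert–Schmidt operators on $\ell^2(\mathbb{Z})$ with $\langle f,g\rangle=\mathrm{tr}(f^*g)$; each $f\in\mathcal{H}$ is uniquely written $f=\sum_{n\in\mathbb{Z}}U^nf_n(\mathbb{K})$ with $\sum_{n,k}|f_n(k)|^2<\infty$, and $\langle f,g\rangle=\sum_{n,k}\overline{f_n(k)}g_n(k)$. The reflection $\Theta:\mathcal{H}\to\mathcal{H}$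 is $\Theta f=\sum_nU^nf_n(-\mathbb{K}-n)$, i.e. $(\Theta f)_n(k)=f_n(-k-n)$. $\mathcal{H}^+=\{f\in\mathcal{H}: f_n(k)=0 \text{ whenever } n+2k<0\}$. Here $D_\beta$ is defined on those $f$ for which the series lies in $\mathcal{H}$. *)

theory Defs
  imports "HOL-Analysis.Analysis"
begin

text \<open>An element f of the Hilbert-Schmidt space, f = sum_n U^n f_n(K), is represented by
  its coefficient function  f n k = f_n(k).\<close>

type_synonym hs = "int \<Rightarrow> int \<Rightarrow> complex"

definition in_HS :: "hs \<Rightarrow> bool" where
  "in_HS f \<longleftrightarrow> (\<lambda>(n,k). (cmod (f n k))\<^sup>2) summable_on UNIV"

definition hs_inner :: "hs \<Rightarrow> hs \<Rightarrow> complex" where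
  "hs_inner f g = (\<Sum>\<^sub>\<infinity>(n,k)\<in>UNIV. cnj (f n k) * g n k)"

definition Theta :: "hs \<Rightarrow> hs" where
  "Theta f = (\<lambda>n k. f n (- k - n))"

definition in_Hplus :: "hs \<Rightarrow> bool" where
  "in_Hplus f \<longleftrightarrow> in_HS f \<and> (\<forall>n k. n + 2 * k < 0 \<longrightarrow> f n k = 0)"

definition conv_increments :: "(int \<Rightarrow> real) \<Rightarrow> bool" where
  "conv_increments \<beta> \<longleftrightarrow>
     (\<exists>L. ((\<lambda>k. \<beta> k - \<beta> (k - 1)) \<longlongrightarrow> L) at_top) \<and>
     (\<exists>L. ((\<lambda>k. \<beta> k - \<beta> (k - 1)) \<longlongrightarrow> L) at_bot)"

definition D_op :: "(int \<Rightarrow> real) \<Rightarrow> hs \<Rightarrow> hs" where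
  "D_op \<beta> f = (\<lambda>n k. complex_of_real (\<beta> (k + n) + \<beta> (- k)) * f n k)"

definition D_dom :: "(int \<Rightarrow> real) \<Rightarrow> hs \<Rightarrow> bool" where
  "D_dom \<beta> f \<longleftrightarrow> in_HS f \<and> in_HS (D_op \<beta> f)"

definition D_inv :: "(int \<Rightarrow> real) \<Rightarrow> hs \<Rightarrow> hs" where
  "D_inv \<beta> f = (\<lambda>n k. f n k / complex_of_real (\<beta> (k + n) + \<beta> (- k)))"

definition D_inv_dom :: "(int \<Rightarrow> real) \<Rightarrow> hs \<Rightarrow> bool" where
  "D_inv_dom \<beta> f \<longleftrightarrow> in_HS f \<and> in_HS (D_inv \<beta> f)"

end

theory Submission
  imports Defs
begin

text \<open>\<open>D\<^sub>\<beta>\<close> multiplies the coefficients \<open>f\<^sub>n(k)\<close> by the positive numbers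
  \<open>\<beta>(k+n) + \<beta>(-k)\<close>, so it is inverted by dividing by them. For \<open>f \<in> \<H>\<^sup>+\<close> the coefficients
  of \<open>f\<close> live on the half-plane \<open>n + 2k \<ge> 0\<close> and those of \<open>\<Theta>f\<close> on the half-plane
  \<open>n + 2k \<le> 0\<close>. Hence every summand of \<open>\<langle>\<Theta>f, D\<^sub>\<beta>\<^sup>-\<^sup>1f\<rangle>\<close> vanishes off the line
  \<open>n = -2k\<close>, where \<open>\<Theta>\<close> fixes the coefficient and the summand is
  \<open>|f\<^sub>n(k)|\<^sup>2 / (2\<beta>(-k)) \<ge> 0\<close>.\<close>

lemma D_inv_D_op:
  assumes "\<And>n k. \<beta> (k + n) + \<beta> (- k) \<noteq> 0"
  shows "D_inv \<beta> (D_op \<beta> f) = f"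
  using assms by (auto simp: D_inv_def D_op_def simp flip: of_real_add)

lemma D_op_D_inv:
  assumes "\<And>n k. \<beta> (k + n) + \<beta> (- k) \<noteq> 0"
  shows "D_op \<beta> (D_inv \<beta> g) = g"
  using assms by (auto simp: D_inv_def D_op_def simp flip: of_real_add)

lemma Hplus_Theta_disjoint_support:
  assumes "in_Hplus f" and "n + 2 * k \<noteq> 0"
  shows "Theta f n k = 0 \<or> f n k = 0"
proof (cases "n + 2 * k < 0")
  case True
  then show ?thesis using assms(1) by (simp add: in_Hplus_def)
next
  case False
  with assms(2) have "n + 2 * (- k - n) < 0" by (simp add: algebra_simps)
  then show ?thesis using assms(1) by (simp add: in_Hplus_def Theta_def)
qed

lemma cnj_mult_divide_real_nonneg:
  assumes "0 \<le> r"
  shows "0 \<le> cnj z * (z / complex_of_real r)"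
proof -
  have "cnj z * z = complex_of_real ((cmod z)\<^sup>2)"
    by (metis complex_norm_square mult.commute of_real_power)
  then have "cnj z * (z / complex_of_real r) = complex_of_real ((cmod z)\<^sup>2 / r)"
    by (simp add: mult.assoc[symmetric])
  then show ?thesis using assms by (simp add: less_eq_complex_def)
qed

lemma hs_inner_Theta_D_inv_nonneg:
  assumes "\<And>k. 0 \<le> \<beta> k" and "in_Hplus f"
  shows "0 \<le> hs_inner (Theta f) (D_inv \<beta> f)"
proof -
  define t where "t = (\<lambda>(n, k). cnj (Theta f n k) * D_inv \<beta> f n k)"
  have t_nonneg: "0 \<le> t (n, k)" for n k
  proof (cases "n + 2 * k = 0")
    case True
    then have "n = - 2 * k" by linarith
    then have "t (n, k) = cnj (f n k) * (f n k / complex_of_real (2 * \<beta> (- k)))"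
      by (simp add: t_def Theta_def D_inv_def)
    also have "\<dots> \<ge> 0" using assms(1) by (intro cnj_mult_divide_real_nonneg) simp
    finally show ?thesis .
  next
    case False
    then have "Theta f n k = 0 \<or> f n k = 0"
      by (rule Hplus_Theta_disjoint_support[OF assms(2)])
    then show ?thesis by (auto simp: t_def D_inv_def)
  qed
  have "0 \<le> infsum t UNIV"
  proof (cases "t summable_on UNIV")
    case True
    then show ?thesis using t_nonneg infsum_nonneg_complex by (metis surj_pair)
  next
    case False
    then show ?thesis by (simp add: infsum_not_exists)
  qed
  then show ?thesis by (simp add: hs_inner_def t_def)
qed

theorem mainTheorem2:
  fixes \<beta> :: "int \<Rightarrow> real"
  assumes "conv_increments \<beta>"
    and "\<And>k. \<beta> k > 0"
  shows "(\<forall>f. D_dom \<beta> f \<longrightarrow> D_inv_dom \<beta> (D_op \<beta> f) \<and> D_inv \<beta> (D_op \<beta> f) = f)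
       \<and> (\<forall>g. D_inv_dom \<beta> g \<longrightarrow> D_dom \<beta> (D_inv \<beta> g) \<and> D_op \<beta> (D_inv \<beta> g) = g)
       \<and> (\<forall>f. in_Hplus f \<and> D_inv_dom \<beta> f \<longrightarrow>
              Im (hs_inner (Theta f) (D_inv \<beta> f)) = 0 \<and> Re (hs_inner (Theta f) (D_inv \<beta> f)) \<ge> 0)"
proof -
  have denom_nonzero: "\<beta> (k + n) + \<beta> (- k) \<noteq> 0" for n k
    using assms(2)[of "k + n"] assms(2)[of "- k"] by linarith
  have "0 \<le> hs_inner (Theta f) (D_inv \<beta> f)" if "in_Hplus f" for f
    using hs_inner_Theta_D_inv_nonneg[OF _ that] assms(2) by (simp add: less_imp_le)
  then show ?thesis
    using D_inv_D_op[OF denom_nonzero] D_op_D_inv[OF denom_nonzero]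
    by (auto simp: D_dom_def D_inv_dom_def less_eq_complex_def)
qed

end
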